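(* Let $\Theta(t,\vartheta,\omega)$ be the characteristics of a solution of the kinetic Kuramoto model for non-identical oscillators with coupling $K>0$ and initial datum $f_0$. Then $$\frac{d}{dt}\int_{\mathcal T\times\mathbb R}\ln\!\left(\frac{\partial\Theta}{\partial\vartheta}(t,\vartheta,\omega)\right)f_0(\vartheta,\omega)\,d\vartheta\,d\omega=-K R(t)^2.$$
   Context: Kinetic Kuramoto model for non-identical oscillators: characteristics $\dot\Theta(t,\vartheta,\omega)=\omega-KR(t)\sin(\Theta(t,\vartheta,\omega)-\varphi(t))$, $\Theta(0,\vartheta,\omega)=\vartheta$, with $R(t)e^{\mathrm{i}\varphi(t)}=\int e^{\mathrm{i}\vartheta}f(t,\vartheta,\omega)d\vartheta d\omega$, where $f(t)$ is the push-forward of the probability measure $f_0$ on $\mathcal T\times\mathbb R$ ($\mathcal T=\mathbb R/2\pi\mathbb Z$) by $(\vartheta,\omega)\mapsto(\Theta(t,\vartheta,\omega),\omega)$. *)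

theory Defs
  imports "HOL-Probability.Probability"
begin

definition dTheta_dvartheta :: "(real \<Rightarrow> real \<Rightarrow> real \<Rightarrow> real) \<Rightarrow> real \<Rightarrow> real \<Rightarrow> real \<Rightarrow> real" where
  "dTheta_dvartheta \<Theta> t \<theta> \<omega> = deriv (\<lambda>y. \<Theta> t y \<omega>) \<theta>"

end

theory Submission
  imports Defs
begin

text \<open>Differentiating the characteristic equation in \<open>\<vartheta>\<close> gives the variational equation
  \<open>\<partial>\<^sub>t \<partial>\<^sub>\<vartheta>\<Theta> = - K R cos (\<Theta> - \<phi>) \<partial>\<^sub>\<vartheta>\<Theta>\<close>, a linear ODE with bounded coefficient and initial value 1.
  Hence \<open>\<partial>\<^sub>\<vartheta>\<Theta>\<close> stays positive and \<open>ln \<partial>\<^sub>\<vartheta>\<Theta>\<close> has time derivative \<open>- K R cos (\<Theta> - \<phi>)\<close>,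
  which is bounded by \<open>K\<close>; dominated convergence lets us differentiate under the integral.
  Finally \<open>\<integral> cos (\<Theta> - \<phi>) df\<^sub>0 = R\<close>, the real part of the order parameter rotated by \<open>-\<phi>\<close>.\<close>

lemma difference_quotient_LIMSEQ:
  fixes f :: "real \<Rightarrow> real"
  assumes "(f has_real_derivative D) (at a)" and "\<And>n. h n \<noteq> 0" and "h \<longlonglongrightarrow> 0"
  shows "(\<lambda>n. (f (a + h n) - f a) / h n) \<longlonglongrightarrow> D"
proof -
  have "((\<lambda>y. (f y - f a) / (y - a)) \<longlongrightarrow> D) (at a)"
    using assms(1) by (simp add: has_field_derivative_iff)
  moreover have "(\<lambda>n. a + h n) \<longlonglongrightarrow> a"
    using tendsto_add[OF tendsto_const assms(3)] by simp
  ultimately have "((\<lambda>y. (f y - f a) / (y - a)) \<circ> (\<lambda>n. a + h n)) \<longlonglongrightarrow> D"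
    using assms(2) by (simp add: tendsto_at_iff_sequentially)
  then show ?thesis by (simp add: comp_def)
qed

lemma linear_ode_nonvanishing:
  fixes f \<alpha> :: "real \<Rightarrow> real"
  assumes f0: "f 0 \<noteq> 0" and d: "\<And>t. (f has_real_derivative \<alpha> t * f t) (at t)"
    and bound: "\<And>t. \<bar>\<alpha> t\<bar> \<le> B"
  shows "f t \<noteq> 0"
proof -
  define g where "g c s = (f s)\<^sup>2 * exp (c * s)" for c s
  have g_deriv: "(g c has_real_derivative (2 * \<alpha> s + c) * g c s) (at s)" for c s
  proof -
    have "(g c has_real_derivative 2 * f s * (\<alpha> s * f s) * exp (c * s) + (f s)\<^sup>2 * (exp (c * s) * c)) (at s)"
      unfolding g_def by (auto intro!: derivative_eq_intros d)
    then show ?thesis by (simp add: g_def algebra_simps power2_eq_square)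
  qed
  have g_nonneg: "g c s \<ge> 0" for c s by (simp add: g_def)
  have "g 0 0 \<le> g (2 * B) t" if "t \<ge> 0"
  proof -
    have "g (2 * B) 0 \<le> g (2 * B) t"
    proof (rule DERIV_nonneg_imp_nondecreasing[OF that])
      fix s
      have "0 \<le> (2 * \<alpha> s + 2 * B) * g (2 * B) s"
        using bound[of s] g_nonneg by (intro mult_nonneg_nonneg) (auto simp: abs_le_iff)
      then show "\<exists>y. (g (2 * B) has_real_derivative y) (at s) \<and> 0 \<le> y"
        using g_deriv by blast
    qed
    then show ?thesis by (simp add: g_def)
  qed
  moreover have "g 0 0 \<le> g (- 2 * B) t" if "t \<le> 0"
  proof -
    have "g (- 2 * B) t \<ge> g (- 2 * B) 0"
    proof (rule DERIV_nonpos_imp_nonincreasing[OF that])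
      fix s
      have "(2 * \<alpha> s - 2 * B) * g (- 2 * B) s \<le> 0"
        using bound[of s] g_nonneg by (intro mult_nonpos_nonneg) (auto simp: abs_le_iff)
      then show "\<exists>y. (g (- 2 * B) has_real_derivative y) (at s) \<and> y \<le> 0"
        using g_deriv[of "- 2 * B" s] by auto
    qed
    then show ?thesis by (simp add: g_def)
  qed
  ultimately show ?thesis
    using f0 by (cases "t \<ge> 0") (auto simp: g_def)
qed

lemma linear_ode_pos:
  fixes f \<alpha> :: "real \<Rightarrow> real"
  assumes f0: "f 0 > 0" and d: "\<And>t. (f has_real_derivative \<alpha> t * f t) (at t)"
    and bound: "\<And>t. \<bar>\<alpha> t\<bar> \<le> B"
  shows "f t > 0"
proof (rule ccontr)
  assume "\<not> f t > 0"
  moreover have "continuous_on UNIV f"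
    using d by (meson DERIV_isCont continuous_at_imp_continuous_on)
  ultimately obtain s where "f s = 0"
    using f0 IVT'[of f t 0 0] IVT2'[of f t 0 0] by (cases "t \<le> 0") (auto intro: continuous_on_subset)
  then show False
    using linear_ode_nonvanishing[of f \<alpha> B s] f0 d bound by auto
qed

text \<open>Writing \<open>cos (Th x y - c) * deriv (Th x) y\<close> as the real part of \<open>cis (- c)\<close> times
  \<open>cis (Th x y) * deriv (Th x) y\<close>, one uniform continuity argument covers all phases \<open>c\<close>.\<close>

lemma uniform_sin_difference_quotient:
  fixes Th :: "real \<Rightarrow> real \<Rightarrow> real"
  assumes cont: "continuous_on UNIV (\<lambda>p. Th (fst p) (snd p))"
    and diff: "\<And>t y. Th t differentiable (at y)"
    and contd: "continuous_on UNIV (\<lambda>p. deriv (Th (fst p)) (snd p))"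
    and e: "e > 0"
  shows "\<exists>\<delta>>0. \<forall>x\<in>cball t 1. \<forall>h c. 0 < h \<and> h < \<delta> \<longrightarrow>
           \<bar>(sin (Th x (\<theta> + h) - c) - sin (Th x \<theta> - c)) / h - cos (Th x \<theta> - c) * deriv (Th x) \<theta>\<bar> \<le> e"
proof -
  define P where "P p = cis (Th (fst p) (snd p)) * deriv (Th (fst p)) (snd p)" for p
  define C where "C = cball t 1 \<times> cball \<theta> (1::real)"
  have "continuous_on C P"
    unfolding P_def by (intro continuous_intros continuous_on_subset[OF cont] continuous_on_subset[OF contd]) auto
  moreover have "compact C"
    unfolding C_def by (intro compact_Times compact_cball)
  ultimately obtain d where d: "d > 0" "\<And>p p'. p \<in> C \<Longrightarrow> p' \<in> C \<Longrightarrow> dist p' p < d \<Longrightarrow> dist (P p') (P p) < e"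
    using e compact_uniformly_continuous unfolding uniformly_continuous_on_def by metis
  have rotate: "cos (Th x y - c) * deriv (Th x) y = Re (cis (- c) * P (x, y))" for x y c
    by (simp add: P_def cos_diff algebra_simps)
  show ?thesis
  proof (intro exI[of _ "min d 1"] conjI ballI allI impI)
    fix x h c assume x: "x \<in> cball t 1" and h: "0 < h \<and> h < min d 1"
    have der: "((\<lambda>y. sin (Th x y - c)) has_real_derivative cos (Th x y - c) * deriv (Th x) y) (at y)" for y
      using diff by (auto intro!: derivative_eq_intros simp: DERIV_deriv_iff_real_differentiable)
    obtain \<xi> where \<xi>: "\<theta> < \<xi>" "\<xi> < \<theta> + h"
      and mvt: "sin (Th x (\<theta> + h) - c) - sin (Th x \<theta> - c) = h * (cos (Th x \<xi> - c) * deriv (Th x) \<xi>)"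
      using MVT2[of \<theta> "\<theta> + h" "\<lambda>y. sin (Th x y - c)" "\<lambda>y. cos (Th x y - c) * deriv (Th x) y"] der h
      by auto
    have "(x, \<theta>) \<in> C" "(x, \<xi>) \<in> C" "dist (x, \<xi>) (x, \<theta>) < d"
      using x \<xi> h by (auto simp: C_def dist_Pair_Pair dist_real_def)
    then have "norm (P (x, \<xi>) - P (x, \<theta>)) < e"
      using d(2) by (simp add: dist_norm)
    moreover have "\<bar>Re (cis (- c) * (P (x, \<xi>) - P (x, \<theta>)))\<bar> \<le> norm (P (x, \<xi>) - P (x, \<theta>))"
      using abs_Re_le_cmod[of "cis (- c) * (P (x, \<xi>) - P (x, \<theta>))"] by (simp add: norm_mult)
    moreover have "(sin (Th x (\<theta> + h) - c) - sin (Th x \<theta> - c)) / h - cos (Th x \<theta> - c) * deriv (Th x) \<theta>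
        = cos (Th x \<xi> - c) * deriv (Th x) \<xi> - cos (Th x \<theta> - c) * deriv (Th x) \<theta>"
      using h by (simp add: mvt)
    moreover have "\<dots> = Re (cis (- c) * (P (x, \<xi>) - P (x, \<theta>)))"
      by (simp only: rotate right_diff_distrib minus_complex.sel)
    ultimately show "\<bar>(sin (Th x (\<theta> + h) - c) - sin (Th x \<theta> - c)) / h - cos (Th x \<theta> - c) * deriv (Th x) \<theta>\<bar> \<le> e"
      by linarith
  qed (use d in simp)
qed

lemma variational_equation:
  fixes Th :: "real \<Rightarrow> real \<Rightarrow> real" and A \<phi> :: "real \<Rightarrow> real"
  assumes cont: "continuous_on UNIV (\<lambda>p. Th (fst p) (snd p))"
    and diff: "\<And>t y. Th t differentiable (at y)"
    and contd: "continuous_on UNIV (\<lambda>p. deriv (Th (fst p)) (snd p))"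
    and ode: "\<And>t y. ((\<lambda>s. Th s y) has_real_derivative \<omega> - A t * sin (Th t y - \<phi> t)) (at t)"
    and bound: "\<And>t. \<bar>A t\<bar> \<le> M"
  shows "((\<lambda>s. deriv (Th s) \<theta>) has_real_derivative - A t * cos (Th t \<theta> - \<phi> t) * deriv (Th t) \<theta>) (at t)"
proof -
  \<comment> \<open>The \<open>\<theta>\<close>-difference quotients \<open>F n\<close> converge to \<open>deriv (Th x) \<theta>\<close> and their time derivatives
    converge uniformly near \<open>t\<close>, so the limit may be differentiated termwise.\<close>
  define h where "h n = inverse (real (Suc n))" for n
  define F where "F n x = (Th x (\<theta> + h n) - Th x \<theta>) / h n" for n x
  define F' where "F' n x = - A x * ((sin (Th x (\<theta> + h n) - \<phi> x) - sin (Th x \<theta> - \<phi> x)) / h n)" for n x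
  define G' where "G' x = - A x * cos (Th x \<theta> - \<phi> x) * deriv (Th x) \<theta>" for x
  define S where "S = ball t (1::real)"
  have F_deriv: "(F n has_derivative (\<lambda>d. F' n x * d)) (at x within S)" for n x
  proof -
    have "(F n has_real_derivative ((\<omega> - A x * sin (Th x (\<theta> + h n) - \<phi> x)) - (\<omega> - A x * sin (Th x \<theta> - \<phi> x))) / h n) (at x)"
      unfolding F_def by (intro DERIV_cdivide DERIV_diff ode)
    moreover have "((\<omega> - A x * sin (Th x (\<theta> + h n) - \<phi> x)) - (\<omega> - A x * sin (Th x \<theta> - \<phi> x))) / h n = F' n x"
      by (simp add: F'_def algebra_simps diff_divide_distrib)
    ultimately have "(F n has_real_derivative F' n x) (at x within S)"
      by (simp add: has_field_derivative_at_within)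
    then show ?thesis
      by (simp add: has_field_derivative_def)
  qed
  have F'_uniform: "\<forall>\<^sub>F n in sequentially. \<forall>x\<in>S. \<forall>d. norm (F' n x * d - G' x * d) \<le> e * norm d"
    if "e > 0" for e
  proof -
    have M: "M \<ge> 0" using bound[of 0] by linarith
    obtain \<delta> where "\<delta> > 0" and \<delta>: "\<And>x h c. x \<in> cball t 1 \<Longrightarrow> 0 < h \<Longrightarrow> h < \<delta> \<Longrightarrow>
        \<bar>(sin (Th x (\<theta> + h) - c) - sin (Th x \<theta> - c)) / h - cos (Th x \<theta> - c) * deriv (Th x) \<theta>\<bar> \<le> e / (M + 1)"
      using uniform_sin_difference_quotient[OF cont diff contd, of "e / (M + 1)" t \<theta>] \<open>e > 0\<close> M by auto
    have "\<forall>\<^sub>F n in sequentially. h n < \<delta>"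
      using order_tendstoD(2)[OF LIMSEQ_inverse_real_of_nat \<open>\<delta> > 0\<close>] by (simp add: h_def)
    then show ?thesis
    proof eventually_elim
      case (elim n)
      show ?case
      proof (intro ballI allI)
        fix x d assume "x \<in> S"
        let ?q = "(sin (Th x (\<theta> + h n) - \<phi> x) - sin (Th x \<theta> - \<phi> x)) / h n - cos (Th x \<theta> - \<phi> x) * deriv (Th x) \<theta>"
        have "\<bar>?q\<bar> \<le> e / (M + 1)"
          using \<delta>[of x "h n" "\<phi> x"] elim \<open>x \<in> S\<close> by (simp add: S_def h_def)
        moreover have "F' n x - G' x = - A x * ?q"
          by (simp add: F'_def G'_def algebra_simps)
        ultimately have "\<bar>F' n x - G' x\<bar> \<le> \<bar>A x\<bar> * (e / (M + 1))"
          by (simp only: abs_mult abs_minus) (rule mult_left_mono, simp_all)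
        also have "\<dots> \<le> M * (e / (M + 1))"
          using bound[of x] \<open>e > 0\<close> M by (intro mult_right_mono) auto
        also have "\<dots> \<le> e"
          using \<open>e > 0\<close> M by (simp add: field_simps)
        finally have "\<bar>F' n x - G' x\<bar> * \<bar>d\<bar> \<le> e * \<bar>d\<bar>"
          by (rule mult_right_mono) simp
        then show "norm (F' n x * d - G' x * d) \<le> e * norm d"
          by (simp add: abs_mult flip: left_diff_distrib)
      qed
    qed
  qed
  have F_lim: "(\<lambda>n. F n x) \<longlonglongrightarrow> deriv (Th x) \<theta>" for x
    unfolding F_def h_def
    by (rule difference_quotient_LIMSEQ[OF _ _ LIMSEQ_inverse_real_of_nat]) (use diff in \<open>auto simp: DERIV_deriv_iff_real_differentiable\<close>)
  obtain g where g: "\<forall>x\<in>S. (\<lambda>n. F n x) \<longlonglongrightarrow> g x \<and> (g has_derivative (\<lambda>d. G' x * d)) (at x within S)"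
    using has_derivative_sequence[of S F "\<lambda>n x d. F' n x * d" "\<lambda>x d. G' x * d" t, OF _ F_deriv F'_uniform _ F_lim]
    by (auto simp: S_def)
  have g_eq: "g x = deriv (Th x) \<theta>" if "x \<in> S" for x
    using g that F_lim LIMSEQ_unique by blast
  have "(g has_real_derivative G' t) (at t)"
  proof -
    have "t \<in> S" "open S" by (auto simp: S_def)
    then show ?thesis
      using g at_within_open[of t S] unfolding has_field_derivative_def by metis
  qed
  then show ?thesis
    unfolding G'_def by (rule has_field_derivative_transform_within_open[where S = S]) (auto simp: S_def g_eq)
qed

lemma has_real_derivative_integral:
  fixes F F' :: "real \<Rightarrow> 'a \<Rightarrow> real"
  assumes "finite_measure M"
    and meas: "\<And>s. F s \<in> borel_measurable M" and int0: "integrable M (F 0)"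
    and deriv: "\<And>s x. ((\<lambda>s. F s x) has_real_derivative F' s x) (at s)"
    and bound: "\<And>s x. \<bar>F' s x\<bar> \<le> B"
  shows "((\<lambda>s. LINT x|M. F s x) has_real_derivative (LINT x|M. F' t x)) (at t)"
proof -
  interpret finite_measure M by fact
  have lipschitz: "\<bar>F a x - F b x\<bar> \<le> B * \<bar>a - b\<bar>" for a b x
    using field_differentiable_bound[of UNIV "\<lambda>s. F s x" "\<lambda>s. F' s x" B a b] deriv bound by auto
  have int: "integrable M (F s)" for s
  proof (rule Bochner_Integration.integrable_bound[OF _ meas])
    show "integrable M (\<lambda>x. \<bar>F 0 x\<bar> + B * \<bar>s\<bar>)"
      using int0 by simp
    show "AE x in M. norm (F s x) \<le> norm (\<bar>F 0 x\<bar> + B * \<bar>s\<bar>)"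
      using lipschitz[of s _ 0] bound[of 0] by (intro AE_I2) (smt (verit) abs_ge_zero mult_nonneg_nonneg real_norm_def)
  qed
  have "F' t \<in> borel_measurable M"
  proof (rule borel_measurable_LIMSEQ_real)
    show "(\<lambda>n. (F (t + inverse (real (Suc n))) x - F t x) / inverse (real (Suc n))) \<longlonglongrightarrow> F' t x" for x
      by (rule difference_quotient_LIMSEQ[OF deriv _ LIMSEQ_inverse_real_of_nat]) simp
  qed (use meas in measurable)
  show ?thesis
    unfolding has_field_derivative_iff tendsto_at_iff_sequentially comp_def
  proof (intro allI impI)
    fix X :: "nat \<Rightarrow> real" assume X: "\<forall>i. X i \<in> UNIV - {t}" "X \<longlonglongrightarrow> t"
    define q where "q i x = (F (X i) x - F t x) / (X i - t)" for i x
    have "(\<lambda>i. LINT x|M. q i x) \<longlonglongrightarrow> (LINT x|M. F' t x)"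
    proof (rule integral_dominated_convergence[where w = "\<lambda>_. B"])
      show "AE x in M. (\<lambda>i. q i x) \<longlonglongrightarrow> F' t x"
        using deriv X unfolding q_def has_field_derivative_iff tendsto_at_iff_sequentially comp_def
        by blast
      show "AE x in M. norm (q i x) \<le> B" for i
        using lipschitz[of "X i" _ t] X(1) by (intro AE_I2) (simp add: q_def abs_divide divide_le_eq)
    qed (use \<open>F' t \<in> borel_measurable M\<close> meas in \<open>auto simp: q_def\<close>)
    moreover have "(LINT x|M. q i x) = ((LINT x|M. F (X i) x) - (LINT x|M. F t x)) / (X i - t)" for i
      using int by (simp add: q_def)
    ultimately show "(\<lambda>i. ((LINT x|M. F (X i) x) - (LINT x|M. F t x)) / (X i - t)) \<longlonglongrightarrow> (LINT x|M. F' t x)"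
      by simp
  qed
qed

lemma order_parameter_le_one:
  assumes "prob_space M" and "r \<ge> 0" and "complex_of_real r * cis \<phi> = (LINT x|M. cis (g x))"
  shows "r \<le> 1"
proof -
  interpret prob_space M by fact
  have "r = norm (LINT x|M. cis (g x))"
    using assms(2,3) by (metis abs_of_nonneg norm_cis norm_mult norm_of_real mult.right_neutral)
  also have "\<dots> \<le> (LINT x|M. norm (cis (g x)))"
    by (rule integral_norm_bound)
  finally show ?thesis
    by (simp add: prob_space)
qed

lemma integral_cos_diff_order_parameter:
  assumes "integrable M (\<lambda>x. cis (g x))"
    and "complex_of_real r * cis \<phi> = (LINT x|M. cis (g x))"
  shows "(LINT x|M. cos (g x - \<phi>)) = r"
proof -
  have "(LINT x|M. cos (g x - \<phi>)) = (LINT x|M. Re (cis (- \<phi>) * cis (g x)))"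
    by (simp add: cos_diff algebra_simps)
  also have "\<dots> = Re (LINT x|M. cis (- \<phi>) * cis (g x))"
    using assms(1) by (intro integral_Re integrable_mult_right)
  also have "\<dots> = Re (cis (- \<phi>) * (complex_of_real r * cis \<phi>))"
    by (simp only: integral_mult_right_zero assms(2))
  also have "\<dots> = Re (complex_of_real r * (cis (- \<phi>) * cis \<phi>))"
    by (simp only: mult.left_commute)
  also have "\<dots> = r"
    by (simp add: cis_mult)
  finally show ?thesis .
qed

lemma abs_coupling_le:
  fixes K r a :: real
  assumes "\<bar>r\<bar> \<le> 1"
  shows "\<bar>K * r * cos a\<bar> \<le> \<bar>K\<bar>"
proof -
  have "\<bar>r * cos a\<bar> \<le> 1"
    using assms abs_cos_le_one[of a] by (simp add: abs_mult mult_le_one)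
  then show ?thesis
    using mult_left_mono[of "\<bar>r * cos a\<bar>" 1 "\<bar>K\<bar>"] by (simp add: abs_mult mult.assoc)
qed

lemma continuous_on_compose3:
  fixes \<Theta> :: "real \<Rightarrow> real \<Rightarrow> real \<Rightarrow> real" and a b c :: "'a::topological_space \<Rightarrow> real"
  assumes "continuous_on UNIV (\<lambda>(t, \<theta>, \<omega>). \<Theta> t \<theta> \<omega>)"
    and "continuous_on UNIV a" "continuous_on UNIV b" "continuous_on UNIV c"
  shows "continuous_on UNIV (\<lambda>x. \<Theta> (a x) (b x) (c x))"
  using continuous_on_compose2[OF assms(1) continuous_on_Pair[OF assms(2) continuous_on_Pair[OF assms(3,4)]]]
  by simp

lemma dTheta_dvartheta_initial:
  assumes "\<And>\<theta>. \<Theta> 0 \<theta> \<omega> = \<theta>"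
  shows "dTheta_dvartheta \<Theta> 0 \<theta> \<omega> = 1"
  using assms by (simp add: dTheta_dvartheta_def)

lemma borel_measurable_dTheta_dvartheta:
  assumes cont: "continuous_on UNIV (\<lambda>(t, \<theta>, \<omega>). \<Theta> t \<theta> \<omega>)"
    and diff: "\<And>t \<theta> \<omega>. (\<lambda>y. \<Theta> t y \<omega>) differentiable (at \<theta>)"
  shows "(\<lambda>x. dTheta_dvartheta \<Theta> s (fst x) (snd x)) \<in> borel_measurable borel"
proof (rule borel_measurable_LIMSEQ_real)
  show "(\<lambda>n. (\<Theta> s (fst x + inverse (real (Suc n))) (snd x) - \<Theta> s (fst x) (snd x)) / inverse (real (Suc n)))
      \<longlonglongrightarrow> dTheta_dvartheta \<Theta> s (fst x) (snd x)" for x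
    unfolding dTheta_dvartheta_def
    by (rule difference_quotient_LIMSEQ[OF _ _ LIMSEQ_inverse_real_of_nat])
      (use diff in \<open>auto simp: DERIV_deriv_iff_real_differentiable\<close>)
  show "(\<lambda>x. (\<Theta> s (fst x + inverse (real (Suc n))) (snd x) - \<Theta> s (fst x) (snd x)) / inverse (real (Suc n)))
      \<in> borel_measurable borel" for n
    by (intro borel_measurable_continuous_onI continuous_intros continuous_on_compose3[OF cont]) auto
qed

lemma ln_dTheta_dvartheta_has_derivative:
  fixes \<Theta> :: "real \<Rightarrow> real \<Rightarrow> real \<Rightarrow> real" and R \<phi> :: "real \<Rightarrow> real"
  assumes cont: "continuous_on UNIV (\<lambda>(t, \<theta>, \<omega>). \<Theta> t \<theta> \<omega>)"
    and diff: "\<And>t \<theta> \<omega>. (\<lambda>y. \<Theta> t y \<omega>) differentiable (at \<theta>)"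
    and cont_dtheta: "\<And>\<omega>. continuous_on UNIV (\<lambda>(t, \<theta>). dTheta_dvartheta \<Theta> t \<theta> \<omega>)"
    and init: "\<And>\<theta> \<omega>. \<Theta> 0 \<theta> \<omega> = \<theta>"
    and ode: "\<And>t \<theta> \<omega>. ((\<lambda>s. \<Theta> s \<theta> \<omega>) has_real_derivative (\<omega> - K * R t * sin (\<Theta> t \<theta> \<omega> - \<phi> t))) (at t)"
    and R_bound: "\<And>t. \<bar>R t\<bar> \<le> 1"
  shows "((\<lambda>s. ln (dTheta_dvartheta \<Theta> s \<theta> \<omega>)) has_real_derivative - K * R t * cos (\<Theta> t \<theta> \<omega> - \<phi> t)) (at t)"
proof -
  define D where "D s = dTheta_dvartheta \<Theta> s \<theta> \<omega>" for s
  define \<alpha> where "\<alpha> s = - K * R s * cos (\<Theta> s \<theta> \<omega> - \<phi> s)" for s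
  have \<alpha>_bound: "\<bar>\<alpha> s\<bar> \<le> \<bar>K\<bar>" for s
    using abs_coupling_le[OF R_bound] by (simp add: \<alpha>_def)
  have D_deriv: "(D has_real_derivative \<alpha> s * D s) (at s)" for s
  proof -
    have "((\<lambda>s. deriv (\<lambda>y. \<Theta> s y \<omega>) \<theta>) has_real_derivative
        - (K * R s) * cos (\<Theta> s \<theta> \<omega> - \<phi> s) * deriv (\<lambda>y. \<Theta> s y \<omega>) \<theta>) (at s)"
    proof (rule variational_equation[where M = "\<bar>K\<bar>"])
      show "continuous_on UNIV (\<lambda>p. \<Theta> (fst p) (snd p) \<omega>)"
        by (intro continuous_on_compose3[OF cont] continuous_intros)
      show "continuous_on UNIV (\<lambda>p. deriv (\<lambda>y. \<Theta> (fst p) y \<omega>) (snd p))"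
        using cont_dtheta[of \<omega>] by (simp add: dTheta_dvartheta_def case_prod_unfold)
    qed (use diff ode abs_coupling_le[OF R_bound, where a = 0] in auto)
    then show ?thesis
      by (simp add: D_def[abs_def] \<alpha>_def dTheta_dvartheta_def)
  qed
  have "D 0 = 1"
    using dTheta_dvartheta_initial init by (simp add: D_def)
  then have D_pos: "D s > 0" for s
    using linear_ode_pos[OF _ D_deriv \<alpha>_bound] by simp
  have "((\<lambda>s. ln (D s)) has_real_derivative inverse (D t) * (\<alpha> t * D t)) (at t)"
    by (rule DERIV_chain2[OF DERIV_ln[OF D_pos] D_deriv])
  moreover have "inverse (D t) * (\<alpha> t * D t) = \<alpha> t"
    using D_pos[of t] by (simp add: field_simps)
  ultimately show ?thesis
    unfolding D_def \<alpha>_def by metis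
qed

theorem mainTheorem9:
  fixes K :: real
    and f0 :: "(real \<times> real) measure"
    and \<Theta> :: "real \<Rightarrow> real \<Rightarrow> real \<Rightarrow> real"
    and R \<phi> :: "real \<Rightarrow> real"
  assumes K_pos: "K > 0"
    and prob: "prob_space f0"
    and sets_f0: "sets f0 = sets borel"
    and cont: "continuous_on UNIV (\<lambda>(t, \<theta>, \<omega>). \<Theta> t \<theta> \<omega>)"
    and diff_theta: "\<And>t \<theta> \<omega>. (\<lambda>y. \<Theta> t y \<omega>) differentiable (at \<theta>)"
    and cont_dtheta: "\<And>\<omega>. continuous_on UNIV (\<lambda>(t, \<theta>). dTheta_dvartheta \<Theta> t \<theta> \<omega>)"
    and init: "\<And>\<theta> \<omega>. \<Theta> 0 \<theta> \<omega> = \<theta>"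
    and ode: "\<And>t \<theta> \<omega>. ((\<lambda>s. \<Theta> s \<theta> \<omega>) has_real_derivative
                 (\<omega> - K * R t * sin (\<Theta> t \<theta> \<omega> - \<phi> t))) (at t)"
    and R_nonneg: "\<And>t. R t \<ge> 0"
    and order_param: "\<And>t. complex_of_real (R t) * cis (\<phi> t)
                             = (LINT x|f0. cis (\<Theta> t (fst x) (snd x)))"
  shows "\<And>t. ((\<lambda>s. LINT x|f0. ln (dTheta_dvartheta \<Theta> s (fst x) (snd x)))
              has_real_derivative (- K * (R t)\<^sup>2)) (at t)"
proof -
  fix t
  interpret prob_space f0 by (rule prob)
  have borel_f0: "borel_measurable f0 = borel_measurable borel"
    by (rule measurable_cong_sets[OF sets_f0 refl])
  have R_bound: "\<bar>R s\<bar> \<le> 1" for s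
    using order_parameter_le_one[OF prob R_nonneg order_param] R_nonneg[of s] by simp
  have "integrable f0 (\<lambda>x. cis (\<Theta> s (fst x) (snd x)))" for s
    by (rule integrable_const_bound[where B = 1])
      (auto simp: borel_f0 intro!: borel_measurable_continuous_onI continuous_intros continuous_on_compose3[OF cont])
  then have mean_cos: "(LINT x|f0. cos (\<Theta> t (fst x) (snd x) - \<phi> t)) = R t"
    by (rule integral_cos_diff_order_parameter[OF _ order_param])
  have "((\<lambda>s. LINT x|f0. ln (dTheta_dvartheta \<Theta> s (fst x) (snd x))) has_real_derivative
      (LINT x|f0. - K * R t * cos (\<Theta> t (fst x) (snd x) - \<phi> t))) (at t)"
  proof (rule has_real_derivative_integral[where B = "\<bar>K\<bar>"])
    show "(\<lambda>x. ln (dTheta_dvartheta \<Theta> s (fst x) (snd x))) \<in> borel_measurable f0" for s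
      unfolding borel_f0 by (rule borel_measurable_ln[OF borel_measurable_dTheta_dvartheta[OF cont diff_theta]])
    show "integrable f0 (\<lambda>x. ln (dTheta_dvartheta \<Theta> 0 (fst x) (snd x)))"
      by (simp add: dTheta_dvartheta_initial init)
  qed (use ln_dTheta_dvartheta_has_derivative[OF cont diff_theta cont_dtheta init ode R_bound]
         abs_coupling_le[OF R_bound] finite_measure_axioms in auto)
  then show "((\<lambda>s. LINT x|f0. ln (dTheta_dvartheta \<Theta> s (fst x) (snd x))) has_real_derivative (- K * (R t)\<^sup>2)) (at t)"
    by (simp add: mean_cos power2_eq_square mult.assoc)
qed

end
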